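(* Consider a polymatroid game with $n$ players, $m$ resources and demands $d_i$, and let $\delta=\max_{i}d_i$. Consider the following algorithm: initially set $\bar d_i=0$ and $\vec x_i=\vec 0$ for all players $i$. For $k=1,\dots,\sum_i d_i$: choose a player $i$ with $\bar d_i<d_i$, increase $\bar d_i$ by one, and replace $\vec x_i$ by a best response $\vec y_i\in\mathbb{B}_{f_i}(\bar d_i)$ to $\vec x_{-i}$ with $\|\vec y_i-\vec x_i\|=1$; then, while there is a player $j$ who can strictly decrease her private cost by unilaterally changing her strategy within $\mathbb{B}_{f_j}(\bar d_j)$, choose such a player and replace $\vec x_j$ by a best response $\vec y_j\in\mathbb{B}_{f_j}(\bar d_j)$ with $\|\vec y_j-\vec x_j\|=2$. Then the total number of iterations of this algorithm (iterations of the inner while-loop, summed over all rounds) is at most $n^2m\delta^3$.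
   Context: $\mathbb{N}=\{0,1,2,\dots\}$; $\|\cdot\|$ is the $L_1$-norm. A polymatroid game: players $N=\{1,\dots,n\}$, resources $E=\{1,\dots,m\}$; each player $i$ has an integral polymatroid rank function $f_i:2^E\to\mathbb{N}$ (normalized, monotone, submodular) and demand $d_i\le f_i(E)$; the strategy set for demand $d$ is $\mathbb{B}_{f_i}(d)=\{\vec x_i\in\mathbb{N}^E: x_i(U)\le f_i(U)\ \forall U\subseteq E,\ x_i(E)=d\}$, where $x_i(U)=\sum_{e\in U}x_{i,e}$. The private cost is $\pi_i(\vec x)=\sum_{e\in E}C_{i,e}(x_{i,e};x_{-i,e})$, $x_{-i,e}=\sum_{j\neq i}x_{j,e}$, with each $C_{i,e}:\mathbb{N}\times\mathbb{N}\to\mathbb{R}_+$ regular: writing $C^-(x;t)=C(x;t)-C(x-1;t)$ for $x\ge1$, $C^-(x;t)\le C^-(x;t+1)$ and $C^-(x;t+1)\le C^-(x+1;t)$ for all $x\ge1,t\in\mathbb{N}$. A best response of player $i$ to $\vec x_{-i}$ within a strategy set is a strategy minimizing $\pi_i(\cdot,\vec x_{-i})$ over that set. *)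

theory Defs
  imports Complex_Main
begin

text \<open>Players are 0..<n, resources are 0..<m (0-based renaming of {1..n}, {1..m}).
A strategy of one player is a vector in N^E, represented as nat => nat with support in {..<m}.
A strategy profile is nat => nat => nat (player, resource).\<close>

definition polymatroid_rank :: "nat \<Rightarrow> (nat set \<Rightarrow> nat) \<Rightarrow> bool" where
  "polymatroid_rank m f \<longleftrightarrow>
     f {} = 0 \<and>
     (\<forall>U V. U \<subseteq> V \<and> V \<subseteq> {..<m} \<longrightarrow> f U \<le> f V) \<and>
     (\<forall>U V. U \<subseteq> {..<m} \<and> V \<subseteq> {..<m} \<longrightarrow> f (U \<union> V) + f (U \<inter> V) \<le> f U + f V)"

definition regular_cost :: "(nat \<Rightarrow> nat \<Rightarrow> real) \<Rightarrow> bool" where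
  "regular_cost C \<longleftrightarrow>
     (\<forall>x t. C x t \<ge> 0) \<and>
     (\<forall>x t. x \<ge> 1 \<longrightarrow>
        C x t - C (x - 1) t \<le> C x (t + 1) - C (x - 1) (t + 1) \<and>
        C x (t + 1) - C (x - 1) (t + 1) \<le> C (x + 1) t - C x t)"

definition strat_set :: "nat \<Rightarrow> (nat set \<Rightarrow> nat) \<Rightarrow> nat \<Rightarrow> (nat \<Rightarrow> nat) set" where
  "strat_set m f d = {xi. (\<forall>e. e \<ge> m \<longrightarrow> xi e = 0) \<and>
                          (\<forall>U. U \<subseteq> {..<m} \<longrightarrow> sum xi U \<le> f U) \<and>
                          sum xi {..<m} = d}"

definition l1_dist :: "nat \<Rightarrow> (nat \<Rightarrow> nat) \<Rightarrow> (nat \<Rightarrow> nat) \<Rightarrow> nat" where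
  "l1_dist m y z = (\<Sum>e<m. (y e - z e) + (z e - y e))"

definition others_load :: "nat \<Rightarrow> (nat \<Rightarrow> nat \<Rightarrow> nat) \<Rightarrow> nat \<Rightarrow> nat \<Rightarrow> nat" where
  "others_load n x i e = (\<Sum>j\<in>{..<n} - {i}. x j e)"

definition private_cost ::
  "nat \<Rightarrow> nat \<Rightarrow> (nat \<Rightarrow> nat \<Rightarrow> nat \<Rightarrow> nat \<Rightarrow> real) \<Rightarrow> (nat \<Rightarrow> nat \<Rightarrow> nat) \<Rightarrow> nat \<Rightarrow> real" where
  "private_cost n m C x i = (\<Sum>e<m. C i e (x i e) (others_load n x i e))"

definition best_response ::
  "nat \<Rightarrow> nat \<Rightarrow> (nat \<Rightarrow> nat \<Rightarrow> nat \<Rightarrow> nat \<Rightarrow> real) \<Rightarrow> (nat \<Rightarrow> nat) set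
   \<Rightarrow> (nat \<Rightarrow> nat \<Rightarrow> nat) \<Rightarrow> nat \<Rightarrow> (nat \<Rightarrow> nat) \<Rightarrow> bool" where
  "best_response n m C S x i y \<longleftrightarrow> y \<in> S \<and>
     (\<forall>z\<in>S. private_cost n m C (x(i := y)) i \<le> private_cost n m C (x(i := z)) i)"

definition can_improve ::
  "nat \<Rightarrow> nat \<Rightarrow> (nat \<Rightarrow> nat set \<Rightarrow> nat) \<Rightarrow> (nat \<Rightarrow> nat \<Rightarrow> nat \<Rightarrow> nat \<Rightarrow> real)
   \<Rightarrow> (nat \<Rightarrow> nat) \<Rightarrow> (nat \<Rightarrow> nat \<Rightarrow> nat) \<Rightarrow> nat \<Rightarrow> bool" where
  "can_improve n m f C dbar x j \<longleftrightarrow>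
     (\<exists>z\<in>strat_set m (f j) (dbar j). private_cost n m C (x(j := z)) j < private_cost n m C x j)"

definition inc_step ::
  "nat \<Rightarrow> nat \<Rightarrow> (nat \<Rightarrow> nat set \<Rightarrow> nat) \<Rightarrow> (nat \<Rightarrow> nat \<Rightarrow> nat \<Rightarrow> nat \<Rightarrow> real) \<Rightarrow> (nat \<Rightarrow> nat)
   \<Rightarrow> (nat \<Rightarrow> nat) \<times> (nat \<Rightarrow> nat \<Rightarrow> nat) \<Rightarrow> (nat \<Rightarrow> nat) \<times> (nat \<Rightarrow> nat \<Rightarrow> nat) \<Rightarrow> bool" where
  "inc_step n m f C d s s' \<longleftrightarrow>
     (case s of (dbar, x) \<Rightarrow>
       (\<forall>j<n. \<not> can_improve n m f C dbar x j) \<and>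
       (\<exists>i<n. dbar i < d i \<and>
          (\<exists>y. best_response n m C (strat_set m (f i) (dbar i + 1)) x i y \<and>
               l1_dist m y (x i) = 1 \<and>
               s' = (dbar(i := dbar i + 1), x(i := y)))))"

definition imp_step ::
  "nat \<Rightarrow> nat \<Rightarrow> (nat \<Rightarrow> nat set \<Rightarrow> nat) \<Rightarrow> (nat \<Rightarrow> nat \<Rightarrow> nat \<Rightarrow> nat \<Rightarrow> real)
   \<Rightarrow> (nat \<Rightarrow> nat) \<times> (nat \<Rightarrow> nat \<Rightarrow> nat) \<Rightarrow> (nat \<Rightarrow> nat) \<times> (nat \<Rightarrow> nat \<Rightarrow> nat) \<Rightarrow> bool" where
  "imp_step n m f C s s' \<longleftrightarrow>
     (case s of (dbar, x) \<Rightarrow>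
       (\<exists>j<n. can_improve n m f C dbar x j \<and>
          (\<exists>y. best_response n m C (strat_set m (f j) (dbar j)) x j y \<and>
               l1_dist m y (x j) = 2 \<and>
               s' = (dbar, x(j := y)))))"

text \<open>A (finite prefix of an) execution: states st 0 .. st L, labels lab k
 (True = iteration of the inner while loop, False = outer-loop increment).\<close>

definition alg_run ::
  "nat \<Rightarrow> nat \<Rightarrow> (nat \<Rightarrow> nat set \<Rightarrow> nat) \<Rightarrow> (nat \<Rightarrow> nat \<Rightarrow> nat \<Rightarrow> nat \<Rightarrow> real) \<Rightarrow> (nat \<Rightarrow> nat)
   \<Rightarrow> nat \<Rightarrow> (nat \<Rightarrow> (nat \<Rightarrow> nat) \<times> (nat \<Rightarrow> nat \<Rightarrow> nat)) \<Rightarrow> (nat \<Rightarrow> bool) \<Rightarrow> bool" where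
  "alg_run n m f C d L st lab \<longleftrightarrow>
     st 0 = (\<lambda>_. 0, \<lambda>_ _. 0) \<and>
     (\<forall>k<L. if lab k then imp_step n m f C (st k) (st (Suc k))
                     else inc_step n m f C d (st k) (st (Suc k)))"

end

theory Submission
  imports Defs
begin

text \<open>Between two demand increments the profile carries a base load \<open>L0\<close>: the total load is \<open>L0\<close>
  plus one unit on a single hot resource, and every strategy is locally optimal against \<open>L0\<close>, i.e.\
  moving a unit from \<open>a\<close> to \<open>b\<close> does not pay when \<open>a\<close> is priced at load \<open>L0 a\<close> and \<open>b\<close> at
  \<open>L0 b + 1\<close>. Regularity forces every improving move to take its unit off the hot resource; its
  target becomes hot and local optimality against \<open>L0\<close> survives. Ranking the at most \<open>m\<delta>\<close> values
  of the marginal costs at load \<open>L0 + 1\<close>, the rank sum of the units a player holds drops with each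
  of her improving moves and never exceeds \<open>\<delta> \<cdot> m\<delta>\<close>. An increment resets \<open>L0\<close> to the current
  load, so each of the \<open>\<Sum>i. d i \<le> n\<delta>\<close> rounds has at most \<open>n m \<delta>\<^sup>2\<close> improving moves.

  Submodularity and \<open>d i \<le> f i E\<close> only guarantee that the best responses chosen by the algorithm
  exist; the count uses regularity alone.\<close>

definition move_unit :: "(nat \<Rightarrow> nat) \<Rightarrow> nat \<Rightarrow> nat \<Rightarrow> nat \<Rightarrow> nat" where
  "move_unit g a b = g(a := g a - 1, b := g b + 1)"

text \<open>\<open>marginal c k T\<close> is the paper's \<open>C\<^sup>-(k; T - k)\<close>: the cost of one's \<open>k\<close>-th unit on a resource
  carrying total load \<open>T\<close>.\<close>
definition marginal :: "(nat \<Rightarrow> nat \<Rightarrow> real) \<Rightarrow> nat \<Rightarrow> nat \<Rightarrow> real" where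
  "marginal c k T = c k (T - k) - c (k - 1) (T - k)"

definition locally_optimal ::
  "(nat \<Rightarrow> nat \<Rightarrow> nat \<Rightarrow> real) \<Rightarrow> nat \<Rightarrow> (nat \<Rightarrow> nat) set \<Rightarrow> (nat \<Rightarrow> nat) \<Rightarrow> (nat \<Rightarrow> nat) \<Rightarrow> bool"
where
  "locally_optimal c m S g T \<longleftrightarrow>
     (\<forall>a<m. \<forall>b<m. a \<noteq> b \<longrightarrow> 1 \<le> g a \<longrightarrow> move_unit g a b \<in> S \<longrightarrow>
        marginal (c a) (g a) (T a) \<le> marginal (c b) (g b + 1) (T b + 1))"

lemma marginal_mono_load:
  assumes "regular_cost c" "1 \<le> k"
  shows "marginal c k T \<le> marginal c k (Suc T)"
proof (cases "k \<le> T")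
  case True
  then have "Suc T - k = Suc (T - k)" by simp
  with assms show ?thesis unfolding regular_cost_def marginal_def by auto
next
  case False
  then show ?thesis unfolding marginal_def by simp
qed

lemma marginal_mono_units:
  assumes "regular_cost c" "1 \<le> k"
  shows "marginal c k T \<le> marginal c (Suc k) T"
proof (cases "Suc k \<le> T")
  case True
  then have "T - k = Suc (T - Suc k)" by simp
  with assms show ?thesis unfolding regular_cost_def marginal_def
    by (metis Suc_eq_plus1 diff_Suc_1)
next
  case False
  then have "T - k = 0" "T - Suc k = 0" by auto
  with assms show ?thesis unfolding regular_cost_def marginal_def
    by (smt (verit) One_nat_def Suc_eq_plus1 diff_Suc_1)
qed

lemma marginal_mono_units_le:
  assumes "regular_cost c" "1 \<le> k" "k \<le> k'"
  shows "marginal c k T \<le> marginal c k' T"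
  using assms(3)
proof (induction k' rule: dec_induct)
  case (step k')
  then show ?case using marginal_mono_units[OF assms(1), of k' T] assms(2) by simp
qed simp

lemma sum_fun_upd:
  fixes g :: "'a \<Rightarrow> 'b::comm_monoid_add"
  assumes "finite U"
  shows "sum (g(p := v)) U + (if p \<in> U then g p else 0) = sum g U + (if p \<in> U then v else 0)"
proof (cases "p \<in> U")
  case True
  have "sum (g(p := v)) (U - {p}) = sum g (U - {p})" by (intro sum.cong) auto
  with True assms show ?thesis by (simp add: sum.remove ac_simps)
next
  case False
  then have "sum (g(p := v)) U = sum g U" by (intro sum.cong) auto
  with False show ?thesis by simp
qed

lemma sum_move_unit:
  assumes "finite U" "a \<noteq> b" "1 \<le> g a"
  shows "sum (move_unit g a b) U + (if a \<in> U then 1 else 0) = sum g U + (if b \<in> U then 1 else 0)"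
  using sum_fun_upd[OF assms(1), of g a "g a - 1"]
    sum_fun_upd[OF assms(1), of "g(a := g a - 1)" b "g b + 1"] assms(2,3)
  unfolding move_unit_def by (auto split: if_splits)

lemma sum_change_two_points:
  fixes g g' :: "'a \<Rightarrow> 'b::comm_monoid_add"
  assumes "finite A" "a \<in> A" "b \<in> A" "a \<noteq> b"
    and "\<And>e. e \<in> A \<Longrightarrow> e \<noteq> a \<Longrightarrow> e \<noteq> b \<Longrightarrow> g' e = g e"
  shows "sum g' A + g a + g b = sum g A + g' a + g' b"
proof -
  have b: "b \<in> A - {a}" and fin: "finite (A - {a})" using assms by auto
  have rest: "sum g' (A - {a} - {b}) = sum g (A - {a} - {b})" using assms by (intro sum.cong) auto
  show ?thesis
    using sum.remove[OF assms(1,2), of g] sum.remove[OF fin b, of g]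
      sum.remove[OF assms(1,2), of g'] sum.remove[OF fin b, of g'] rest
    by (simp add: ac_simps)
qed

lemma sum_diff_balance:
  fixes g h :: "'a \<Rightarrow> nat"
  shows "sum g A + (\<Sum>e\<in>A. h e - g e) = sum h A + (\<Sum>e\<in>A. g e - h e)"
  unfolding sum.distrib[symmetric] by (rule sum.cong) auto

lemma card_filter_less_Suc:
  "card {i. i < Suc k \<and> P i} = card {i. i < k \<and> P i} + (if P k then 1 else 0)"
proof -
  have "{i. i < Suc k \<and> P i} = (if P k then insert k {i. i < k \<and> P i} else {i. i < k \<and> P i})"
    by (auto simp: less_Suc_eq)
  then show ?thesis by simp
qed

lemma l1_dist_split: "l1_dist m g h = (\<Sum>e<m. g e - h e) + (\<Sum>e<m. h e - g e)"
  unfolding l1_dist_def by (simp add: sum.distrib)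

lemma l1_dist_2_move_unit:
  fixes g h :: "nat \<Rightarrow> nat"
  assumes "\<forall>e. e \<ge> m \<longrightarrow> g e = 0" "\<forall>e. e \<ge> m \<longrightarrow> h e = 0"
    and "sum g {..<m} = sum h {..<m}" "l1_dist m g h = 2"
  shows "\<exists>a<m. \<exists>b<m. a \<noteq> b \<and> 1 \<le> h a \<and> g = move_unit h a b"
proof -
  have up: "(\<Sum>e<m. g e - h e) = 1" and down: "(\<Sum>e<m. h e - g e) = 1"
    using assms(3,4) sum_diff_balance[of g "{..<m}" h] l1_dist_split[of m g h] by linarith+
  obtain a where a: "a < m" "h a - g a = 1" "\<forall>e<m. e \<noteq> a \<longrightarrow> h e - g e = 0"
    using down unfolding sum_eq_1_iff[OF finite_lessThan] by auto
  obtain b where b: "b < m" "g b - h b = 1" "\<forall>e<m. e \<noteq> b \<longrightarrow> g e - h e = 0"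
    using up unfolding sum_eq_1_iff[OF finite_lessThan] by auto
  have ab: "a \<noteq> b" using a(2) b(2) by auto
  have "g = move_unit h a b"
  proof
    fix e show "g e = move_unit h a b e"
      using a b assms(1,2) unfolding move_unit_def
      by (cases "e < m"; cases "e = a"; cases "e = b") (auto, meson le_antisym)+
  qed
  moreover have "1 \<le> h a" using a(2) by simp
  ultimately show ?thesis using a(1) b(1) ab by blast
qed

lemma l1_dist_1_increment:
  fixes g h :: "nat \<Rightarrow> nat"
  assumes "\<forall>e. e \<ge> m \<longrightarrow> g e = 0" "\<forall>e. e \<ge> m \<longrightarrow> h e = 0"
    and "sum g {..<m} = sum h {..<m} + 1" "l1_dist m g h = 1"
  shows "\<exists>c<m. g = h(c := h c + 1)"
proof -
  have up: "(\<Sum>e<m. g e - h e) = 1" and down: "(\<Sum>e<m. h e - g e) = 0"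
    using assms(3,4) sum_diff_balance[of g "{..<m}" h] l1_dist_split[of m g h] by linarith+
  obtain c where c: "c < m" "g c - h c = 1" "\<forall>e<m. e \<noteq> c \<longrightarrow> g e - h e = 0"
    using up unfolding sum_eq_1_iff[OF finite_lessThan] by auto
  have le: "\<forall>e<m. h e \<le> g e"
    using down sum_eq_0_iff[of "{..<m}" "\<lambda>e. h e - g e"] by simp
  have "g = h(c := h c + 1)"
  proof
    fix e show "g e = (h(c := h c + 1)) e"
      using c le assms(1,2) by (cases "e < m"; cases "e = c") (auto, meson le_antisym)+
  qed
  then show ?thesis using c(1) by blast
qed

lemma strat_set_le: "g \<in> strat_set m F D \<Longrightarrow> e < m \<Longrightarrow> g e \<le> D"
  unfolding strat_set_def using member_le_sum[of e "{..<m}" g] by auto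

lemma strat_set_0: "strat_set m F 0 = {\<lambda>_. 0}"
proof (intro equalityI subsetI)
  fix g assume g: "g \<in> strat_set m F 0"
  show "g \<in> {\<lambda>_. 0}"
  proof (simp, rule ext)
    fix e show "g e = 0"
      using g strat_set_le[OF g, of e] unfolding strat_set_def by (cases "e < m") auto
  qed
qed (simp add: strat_set_def)

lemma move_unit_in_strat_set:
  assumes g: "g \<in> strat_set m F D" and z: "z \<in> strat_set m F D'"
    and ab: "a < m" "b < m" "a \<noteq> b" "1 \<le> g a"
    and dominated: "\<And>U. U \<subseteq> {..<m} \<Longrightarrow> b \<in> U \<Longrightarrow> a \<notin> U \<Longrightarrow> sum g U < sum z U"
  shows "move_unit g a b \<in> strat_set m F D"
proof -
  have "sum (move_unit g a b) U \<le> F U" if U: "U \<subseteq> {..<m}" for U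
  proof -
    have fin: "finite U" using U finite_subset by blast
    have "sum g U \<le> F U" "sum z U \<le> F U" using g z U unfolding strat_set_def by auto
    then show ?thesis
      using sum_move_unit[of U a b g] fin ab(3,4) dominated[OF U] by (auto split: if_splits)
  qed
  moreover have "sum (move_unit g a b) {..<m} = D"
    using sum_move_unit[of "{..<m}" a b g] g ab unfolding strat_set_def by auto
  ultimately show ?thesis
    using g ab unfolding strat_set_def move_unit_def by auto
qed

text \<open>Dropping the extra unit on \<open>b\<close> only lowers the source price of moves avoiding \<open>b\<close>; a move
  into \<open>b\<close> is dominated by the same move for \<open>g\<close>, whose source price is higher and target price lower.\<close>
lemma locally_optimal_drop_load:
  assumes reg: "\<And>e. e < m \<Longrightarrow> regular_cost (c e)"
    and lo_g: "locally_optimal c m S g L0"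
    and lo_y: "locally_optimal c m S' y (\<lambda>e. L0 e + (if e = b then 1 else 0))"
    and b: "b < m" "g b \<le> y b"
    and moves_into_b: "\<And>a. a < m \<Longrightarrow> a \<noteq> b \<Longrightarrow> 1 \<le> y a \<Longrightarrow> move_unit y a b \<in> S' \<Longrightarrow>
                      y a \<le> g a \<and> move_unit g a b \<in> S"
  shows "locally_optimal c m S' y L0"
  unfolding locally_optimal_def
proof (intro allI impI)
  fix a e assume ae: "a < m" "e < m" "a \<noteq> e" "1 \<le> y a" "move_unit y a e \<in> S'"
  show "marginal (c a) (y a) (L0 a) \<le> marginal (c e) (y e + 1) (L0 e + 1)"
  proof (cases "e = b")
    case False
    have "marginal (c a) (y a) (L0 a) \<le> marginal (c a) (y a) (L0 a + (if a = b then 1 else 0))"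
      using marginal_mono_load[OF reg[OF ae(1)] ae(4)] by (cases "a = b") simp_all
    also have "\<dots> \<le> marginal (c e) (y e + 1) (L0 e + 1)"
      using lo_y ae False unfolding locally_optimal_def by fastforce
    finally show ?thesis .
  next
    case True
    with moves_into_b ae have ga: "y a \<le> g a" "move_unit g a b \<in> S" by auto
    have "marginal (c a) (y a) (L0 a) \<le> marginal (c a) (g a) (L0 a)"
      using marginal_mono_units_le[OF reg[OF ae(1)] ae(4) ga(1)] .
    also have "\<dots> \<le> marginal (c b) (g b + 1) (L0 b + 1)"
      using lo_g ae ga b True unfolding locally_optimal_def by auto
    also have "\<dots> \<le> marginal (c b) (y b + 1) (L0 b + 1)"
      using marginal_mono_units_le[OF reg[OF b(1)]] b by simp
    finally show ?thesis using True by simp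
  qed
qed

lemma move_from_hot_locally_optimal:
  assumes reg: "\<And>e. e < m \<Longrightarrow> regular_cost (c e)"
    and lo: "locally_optimal c m (strat_set m F D) g L0"
    and hb: "h < m" "b < m" "h \<noteq> b" "1 \<le> g h"
    and g: "g \<in> strat_set m F D" and y: "move_unit g h b \<in> strat_set m F D"
    and lo_y: "locally_optimal c m (strat_set m F D) (move_unit g h b) (\<lambda>e. L0 e + (if e = b then 1 else 0))"
  shows "locally_optimal c m (strat_set m F D) (move_unit g h b) L0"
proof (rule locally_optimal_drop_load[OF reg lo lo_y hb(2)])
  show "g b \<le> move_unit g h b b" unfolding move_unit_def by simp
  fix a assume a: "a < m" "a \<noteq> b" "1 \<le> move_unit g h b a"
    and moved: "move_unit (move_unit g h b) a b \<in> strat_set m F D"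
  show "move_unit g h b a \<le> g a \<and> move_unit g a b \<in> strat_set m F D"
  proof (cases "a = h")
    case True
    then show ?thesis using y hb unfolding move_unit_def by auto
  next
    case False
    have "move_unit g a b \<in> strat_set m F D"
    proof (rule move_unit_in_strat_set[OF g moved])
      show "a < m" "b < m" "a \<noteq> b" "1 \<le> g a" using a hb False unfolding move_unit_def by auto
      fix U assume U: "U \<subseteq> {..<m}" "b \<in> U" "a \<notin> U"
      then have fin: "finite U" using finite_subset by blast
      show "sum g U < sum (move_unit (move_unit g h b) a b) U"
        using sum_move_unit[of U h b g] sum_move_unit[of U a b "move_unit g h b"] fin a hb U
        by (auto split: if_splits)
    qed
    then show ?thesis using False a unfolding move_unit_def by auto
  qed
qed

lemma increment_locally_optimal:
  assumes reg: "\<And>e. e < m \<Longrightarrow> regular_cost (c e)"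
    and lo: "locally_optimal c m (strat_set m F D) g L0"
    and b: "b < m"
    and g: "g \<in> strat_set m F D"
    and lo_y: "locally_optimal c m (strat_set m F (Suc D)) (g(b := g b + 1)) (\<lambda>e. L0 e + (if e = b then 1 else 0))"
  shows "locally_optimal c m (strat_set m F (Suc D)) (g(b := g b + 1)) L0"
proof (rule locally_optimal_drop_load[OF reg lo lo_y b])
  show "g b \<le> (g(b := g b + 1)) b" by simp
  fix a assume a: "a < m" "a \<noteq> b" "1 \<le> (g(b := g b + 1)) a"
    and moved: "move_unit (g(b := g b + 1)) a b \<in> strat_set m F (Suc D)"
  have "move_unit g a b \<in> strat_set m F D"
  proof (rule move_unit_in_strat_set[OF g moved])
    show "a < m" "b < m" "a \<noteq> b" "1 \<le> g a" using a b by auto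
    fix U assume U: "U \<subseteq> {..<m}" "b \<in> U" "a \<notin> U"
    then have fin: "finite U" using finite_subset by blast
    show "sum g U < sum (move_unit (g(b := g b + 1)) a b) U"
      using sum_fun_upd[OF fin, of g b "g b + 1"] sum_move_unit[of U a b "g(b := g b + 1)"] fin a U
      by auto
  qed
  then show "(g(b := g b + 1)) a \<le> g a \<and> move_unit g a b \<in> strat_set m F D" using a by simp
qed

lemma improving_move_leaves_hot:
  assumes reg: "\<And>e. e < m \<Longrightarrow> regular_cost (c e)"
    and lo: "locally_optimal c m S g L0"
    and T: "\<And>e. T e = L0 e + (if e = h then 1 else 0)"
    and ab: "a < m" "b < m" "a \<noteq> b" "1 \<le> g a" "move_unit g a b \<in> S"
    and improving: "marginal (c b) (Suc (g b)) (Suc (T b)) < marginal (c a) (g a) (T a)"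
  shows "a = h"
proof (rule ccontr)
  assume "a \<noteq> h"
  then have "marginal (c a) (g a) (T a) \<le> marginal (c b) (g b + 1) (L0 b + 1)"
    using lo ab T unfolding locally_optimal_def by auto
  also have "\<dots> \<le> marginal (c b) (Suc (g b)) (Suc (T b))"
    using marginal_mono_load[OF reg[OF ab(2)], of "Suc (g b)" "Suc (L0 b)"] T[of b]
    by (cases "b = h") simp_all
  finally show False using improving by simp
qed

definition rank :: "real set \<Rightarrow> real \<Rightarrow> nat" where
  "rank V r = card {v \<in> V. v < r}"

lemma rank_le_card: "finite V \<Longrightarrow> rank V r \<le> card V"
  unfolding rank_def by (rule card_mono) auto

lemma rank_strict_mono:
  assumes "finite V" "v \<in> V" "v < w"
  shows "rank V v < rank V w"
  unfolding rank_def using assms by (intro psubset_card_mono) auto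

definition unit_values ::
  "(nat \<Rightarrow> nat \<Rightarrow> nat \<Rightarrow> real) \<Rightarrow> nat \<Rightarrow> nat \<Rightarrow> (nat \<Rightarrow> nat) \<Rightarrow> real set"
where
  "unit_values c m dl L0 = (\<lambda>(e, k). marginal (c e) k (Suc (L0 e))) ` ({..<m} \<times> {1..dl})"

definition rank_sum ::
  "(nat \<Rightarrow> nat \<Rightarrow> nat \<Rightarrow> real) \<Rightarrow> nat \<Rightarrow> nat \<Rightarrow> (nat \<Rightarrow> nat) \<Rightarrow> (nat \<Rightarrow> nat) \<Rightarrow> nat" where
  "rank_sum c m dl L0 g =
     (\<Sum>e<m. \<Sum>k<g e. rank (unit_values c m dl L0) (marginal (c e) (Suc k) (Suc (L0 e))))"

lemma finite_unit_values: "finite (unit_values c m dl L0)"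
  unfolding unit_values_def by simp

lemma card_unit_values_le: "card (unit_values c m dl L0) \<le> m * dl"
  unfolding unit_values_def
  using card_image_le[of "{..<m} \<times> {1..dl}"] by (simp add: card_cartesian_product)

lemma rank_sum_le:
  assumes "g \<in> strat_set m F D"
  shows "rank_sum c m dl L0 g \<le> D * (m * dl)"
proof -
  have rank_le: "rank (unit_values c m dl L0) r \<le> m * dl" for r
    using rank_le_card[OF finite_unit_values] card_unit_values_le le_trans by blast
  have "rank_sum c m dl L0 g \<le> (\<Sum>e<m. g e * (m * dl))"
    unfolding rank_sum_def
  proof (intro sum_mono)
    fix e
    show "(\<Sum>k<g e. rank (unit_values c m dl L0) (marginal (c e) (Suc k) (Suc (L0 e)))) \<le> g e * (m * dl)"
      using sum_bounded_above[of "{..<g e}" _ "m * dl"] rank_le by simp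
  qed
  also have "\<dots> = D * (m * dl)"
    using assms unfolding strat_set_def by (simp add: sum_distrib_right[symmetric])
  finally show ?thesis .
qed

lemma rank_sum_move_unit:
  assumes "a < m" "b < m" "a \<noteq> b" "1 \<le> g a"
  shows "rank_sum c m dl L0 (move_unit g a b) + rank (unit_values c m dl L0) (marginal (c a) (g a) (Suc (L0 a)))
       = rank_sum c m dl L0 g + rank (unit_values c m dl L0) (marginal (c b) (Suc (g b)) (Suc (L0 b)))"
proof -
  define r where "r e k = rank (unit_values c m dl L0) (marginal (c e) k (Suc (L0 e)))" for e k
  define G where "G e p = (\<Sum>k<p. r e (Suc k))" for e p
  have rank_sum_G: "rank_sum c m dl L0 g' = (\<Sum>e<m. G e (g' e))" for g'
    unfolding rank_sum_def G_def r_def ..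
  have moved: "move_unit g a b a = g a - 1" "move_unit g a b b = g b + 1"
    "\<And>e. e \<noteq> a \<Longrightarrow> e \<noteq> b \<Longrightarrow> move_unit g a b e = g e"
    unfolding move_unit_def using assms by auto
  have "(\<Sum>e<m. G e (move_unit g a b e)) + G a (g a) + G b (g b)
      = (\<Sum>e<m. G e (g e)) + G a (move_unit g a b a) + G b (move_unit g a b b)"
    by (rule sum_change_two_points) (use assms moved in auto)
  moreover have "G a (g a) = G a (g a - 1) + r a (g a)"
  proof -
    obtain k where "g a = Suc k" using assms(4) by (cases "g a") auto
    then show ?thesis unfolding G_def by simp
  qed
  moreover have "G b (g b + 1) = G b (g b) + r b (g b + 1)" unfolding G_def by simp
  ultimately show ?thesis unfolding rank_sum_G using moved unfolding r_def by simp
qed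

lemma rank_sum_move_unit_less:
  assumes "a < m" "b < m" "a \<noteq> b" "1 \<le> g a" "Suc (g b) \<le> dl"
    and "marginal (c b) (Suc (g b)) (Suc (L0 b)) < marginal (c a) (g a) (Suc (L0 a))"
  shows "rank_sum c m dl L0 (move_unit g a b) < rank_sum c m dl L0 g"
proof -
  have "marginal (c b) (Suc (g b)) (Suc (L0 b)) \<in> unit_values c m dl L0"
    unfolding unit_values_def using assms(2,5) by (intro image_eqI[of _ _ "(b, Suc (g b))"]) auto
  from rank_strict_mono[OF finite_unit_values this assms(6)]
  show ?thesis using rank_sum_move_unit[of a m b g c dl L0] assms(1-4) by simp
qed

definition total_load :: "nat \<Rightarrow> (nat \<Rightarrow> nat \<Rightarrow> nat) \<Rightarrow> nat \<Rightarrow> nat" where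
  "total_load n x e = (\<Sum>i<n. x i e)"

lemma total_load_split: "j < n \<Longrightarrow> total_load n x e = x j e + others_load n x j e"
  unfolding total_load_def others_load_def by (simp add: sum.remove)

lemma others_load_fun_upd: "others_load n (x(j := y)) j e = others_load n x j e"
  unfolding others_load_def by (intro sum.cong) auto

lemma total_load_fun_upd: "j < n \<Longrightarrow> total_load n (x(j := y)) e + x j e = total_load n x e + y e"
  using total_load_split[of j n "x(j := y)" e] total_load_split[of j n x e] others_load_fun_upd[of n x j y e]
  by simp

lemma private_cost_move_unit:
  assumes "j < n" "a < m" "b < m" "a \<noteq> b" "1 \<le> x j a"
  shows "private_cost n m C (x(j := move_unit (x j) a b)) j =
         private_cost n m C x j + marginal (C j b) (Suc (x j b)) (Suc (total_load n x b))
           - marginal (C j a) (x j a) (total_load n x a)"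
proof -
  define ol where "ol = others_load n x j"
  define w where "w = move_unit (x j) a b"
  have w: "w a = x j a - 1" "w b = x j b + 1" "\<And>e. e \<noteq> a \<Longrightarrow> e \<noteq> b \<Longrightarrow> w e = x j e"
    unfolding w_def move_unit_def using assms by auto
  have "(\<Sum>e<m. C j e (w e) (ol e)) + C j a (x j a) (ol a) + C j b (x j b) (ol b)
      = (\<Sum>e<m. C j e (x j e) (ol e)) + C j a (w a) (ol a) + C j b (w b) (ol b)"
    by (rule sum_change_two_points) (use assms w in auto)
  moreover have "total_load n x a = x j a + ol a" "total_load n x b = x j b + ol b"
    using total_load_split[OF assms(1)] ol_def by auto
  ultimately show ?thesis
    unfolding private_cost_def marginal_def w_def[symmetric] ol_def[symmetric] others_load_fun_upd
    using w by simp
qed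

lemma best_response_locally_optimal:
  assumes "j < n" "\<forall>z\<in>S. private_cost n m C x j \<le> private_cost n m C (x(j := z)) j"
  shows "locally_optimal (C j) m S (x j) (total_load n x)"
  unfolding locally_optimal_def
  using assms private_cost_move_unit[OF assms(1)] by fastforce

lemma improving_best_response_move:
  assumes j: "j < n" "x j \<in> strat_set m F D"
    and improvable: "\<exists>z\<in>strat_set m F D. private_cost n m C (x(j := z)) j < private_cost n m C x j"
    and br: "best_response n m C (strat_set m F D) x j y" and dist: "l1_dist m y (x j) = 2"
  obtains a b where "a < m" "b < m" "a \<noteq> b" "1 \<le> x j a" "y = move_unit (x j) a b"
    "marginal (C j b) (Suc (x j b)) (Suc (total_load n x b)) < marginal (C j a) (x j a) (total_load n x a)"
proof -
  have y: "y \<in> strat_set m F D" using br unfolding best_response_def by simp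
  obtain a b where ab: "a < m" "b < m" "a \<noteq> b" "1 \<le> x j a" "y = move_unit (x j) a b"
    using l1_dist_2_move_unit[OF _ _ _ dist] y j(2) unfolding strat_set_def by auto
  have "private_cost n m C (x(j := y)) j < private_cost n m C x j"
    using improvable br unfolding best_response_def by fastforce
  then show ?thesis using that ab private_cost_move_unit[of j n a m b x C] j(1) ab(1-4) by simp
qed

locale regular_game =
  fixes n m :: nat and f :: "nat \<Rightarrow> nat set \<Rightarrow> nat" and C :: "nat \<Rightarrow> nat \<Rightarrow> nat \<Rightarrow> nat \<Rightarrow> real"
  assumes regular: "\<And>i e. i < n \<Longrightarrow> e < m \<Longrightarrow> regular_cost (C i e)"
begin

definition feasible_state :: "(nat \<Rightarrow> nat) \<Rightarrow> (nat \<Rightarrow> nat) \<times> (nat \<Rightarrow> nat \<Rightarrow> nat) \<Rightarrow> bool" where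
  "feasible_state d s \<longleftrightarrow> (\<forall>j<n. snd s j \<in> strat_set m (f j) (fst s j) \<and> fst s j \<le> d j)"

definition equilibrium :: "(nat \<Rightarrow> nat) \<times> (nat \<Rightarrow> nat \<Rightarrow> nat) \<Rightarrow> bool" where
  "equilibrium s \<longleftrightarrow> (\<forall>j<n. \<not> can_improve n m f C (fst s) (snd s) j)"

definition hot_state :: "(nat \<Rightarrow> nat) \<times> (nat \<Rightarrow> nat \<Rightarrow> nat) \<Rightarrow> (nat \<Rightarrow> nat) \<Rightarrow> nat \<Rightarrow> bool" where
  "hot_state s L0 h \<longleftrightarrow> h < m \<and> (\<forall>e. total_load n (snd s) e = L0 e + (if e = h then 1 else 0)) \<and>
     (\<forall>j<n. locally_optimal (C j) m (strat_set m (f j) (fst s j)) (snd s j) L0)"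

definition potential ::
  "(nat \<Rightarrow> nat) \<Rightarrow> nat \<Rightarrow> (nat \<Rightarrow> nat) \<times> (nat \<Rightarrow> nat \<Rightarrow> nat) \<Rightarrow> (nat \<Rightarrow> nat) \<Rightarrow> nat" where
  "potential d dl s L0 =
     (\<Sum>i<n. d i - fst s i) * (n * (dl * (m * dl))) + (\<Sum>j<n. rank_sum (C j) m dl L0 (snd s j))"

lemma initial_state: "feasible_state d (\<lambda>_. 0, \<lambda>_ _. 0)" "equilibrium (\<lambda>_. 0, \<lambda>_ _. 0)"
  unfolding feasible_state_def equilibrium_def can_improve_def by (auto simp: strat_set_0)

lemma imp_step_feasible: "feasible_state d s \<Longrightarrow> imp_step n m f C s s' \<Longrightarrow> feasible_state d s'"
  unfolding feasible_state_def imp_step_def best_response_def by (auto split: prod.splits)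

lemma inc_step_feasible: "feasible_state d s \<Longrightarrow> inc_step n m f C d s s' \<Longrightarrow> feasible_state d s'"
  unfolding feasible_state_def inc_step_def best_response_def by (auto split: prod.splits)

lemma improving_move_from_hot:
  assumes j: "j < n" "x j \<in> strat_set m (f j) (dbar j)" "can_improve n m f C dbar x j"
    and br: "best_response n m C (strat_set m (f j) (dbar j)) x j y" and dist: "l1_dist m y (x j) = 2"
    and h: "h < m" and T: "\<And>e. total_load n x e = L0 e + (if e = h then 1 else 0)"
    and lo: "locally_optimal (C j) m (strat_set m (f j) (dbar j)) (x j) L0"
  obtains b where "b < m" "h \<noteq> b" "1 \<le> x j h" "y = move_unit (x j) h b"
    "marginal (C j b) (Suc (x j b)) (Suc (L0 b)) < marginal (C j h) (x j h) (Suc (L0 h))"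
proof -
  have reg: "\<And>e. e < m \<Longrightarrow> regular_cost (C j e)" using regular j(1) .
  obtain a b where ab: "a < m" "b < m" "a \<noteq> b" "1 \<le> x j a" and y: "y = move_unit (x j) a b"
    and improving: "marginal (C j b) (Suc (x j b)) (Suc (total_load n x b))
                      < marginal (C j a) (x j a) (total_load n x a)"
    using improving_best_response_move[OF j(1,2) _ br dist] j(3) unfolding can_improve_def by metis
  have "a = h"
    using improving_move_leaves_hot[OF reg lo T ab] br y improving unfolding best_response_def by simp
  then show ?thesis using that ab y improving T[of b] T[of h] by auto
qed

lemma improvement_step:
  assumes dl: "\<forall>i<n. d i \<le> dl" and feasible: "feasible_state d s" and hot: "hot_state s L0 h"
    and step: "imp_step n m f C s s'"
  obtains b where "hot_state s' L0 b" "potential d dl s' L0 < potential d dl s L0"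
proof -
  obtain dbar x where s: "s = (dbar, x)" by (cases s)
  obtain j y where j: "j < n" "can_improve n m f C dbar x j"
    and br: "best_response n m C (strat_set m (f j) (dbar j)) x j y"
    and dist: "l1_dist m y (x j) = 2" and s': "s' = (dbar, x(j := y))"
    using step unfolding imp_step_def s by auto
  define S where "S = strat_set m (f j) (dbar j)"
  define x' where "x' = x(j := y)"
  have xS: "x j \<in> S" and yS: "y \<in> S" and dbar: "dbar j \<le> dl"
    using feasible br dl j(1) unfolding feasible_state_def best_response_def S_def s
    by (auto intro: le_trans)
  have h: "h < m" and T: "\<And>e. total_load n x e = L0 e + (if e = h then 1 else 0)"
    and lo: "\<And>i. i < n \<Longrightarrow> locally_optimal (C i) m (strat_set m (f i) (dbar i)) (x i) L0"
    using hot unfolding hot_state_def s by auto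
  obtain b where b: "b < m" "h \<noteq> b" "1 \<le> x j h" and y: "y = move_unit (x j) h b"
    and improving: "marginal (C j b) (Suc (x j b)) (Suc (L0 b)) < marginal (C j h) (x j h) (Suc (L0 h))"
    using improving_move_from_hot[OF j(1) xS[unfolded S_def] j(2) br dist h T lo[OF j(1)]] .
  have T': "total_load n x' = (\<lambda>e. L0 e + (if e = b then 1 else 0))"
  proof
    fix e show "total_load n x' e = L0 e + (if e = b then 1 else 0)"
      using total_load_fun_upd[OF j(1), of x y e] T[of e] b y
      unfolding x'_def move_unit_def by (cases "e = h"; cases "e = b") auto
  qed
  have "locally_optimal (C j) m S y (total_load n x')"
    using best_response_locally_optimal[OF j(1), of S m C x'] br unfolding x'_def best_response_def S_def by simp
  then have "locally_optimal (C j) m S y L0"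
    using move_from_hot_locally_optimal[OF regular[OF j(1)] lo[OF j(1)] h b] xS yS T' y
    unfolding S_def by simp
  then have "hot_state s' L0 b"
    unfolding hot_state_def s' x'_def[symmetric] using lo T' b(1) unfolding x'_def S_def by auto
  moreover have "rank_sum (C j) m dl L0 y < rank_sum (C j) m dl L0 (x j)"
  proof -
    have "Suc (x j b) \<le> dl"
      using strat_set_le[OF yS[unfolded S_def] b(1)] dbar b y unfolding move_unit_def by simp
    then show ?thesis using rank_sum_move_unit_less[of h m b "x j" dl "C j" L0] h b y improving by simp
  qed
  then have "(\<Sum>i<n. rank_sum (C i) m dl L0 (x' i)) < (\<Sum>i<n. rank_sum (C i) m dl L0 (x i))"
    using j(1) unfolding x'_def by (intro sum_strict_mono_ex1) auto
  then have "potential d dl s' L0 < potential d dl s L0"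
    unfolding potential_def s s' x'_def by simp
  ultimately show ?thesis using that by blast
qed

lemma increment_hot:
  assumes feasible: "feasible_state d s" and step: "inc_step n m f C d s s'"
  obtains c where "hot_state s' (total_load n (snd s)) c"
proof -
  obtain dbar x where s: "s = (dbar, x)" by (cases s)
  obtain i y where eq: "\<forall>j<n. \<not> can_improve n m f C dbar x j" and i: "i < n"
    and br: "best_response n m C (strat_set m (f i) (dbar i + 1)) x i y"
    and dist: "l1_dist m y (x i) = 1" and s': "s' = (dbar(i := dbar i + 1), x(i := y))"
    using step unfolding inc_step_def s by auto
  define x' where "x' = x(i := y)"
  define S where "S = strat_set m (f i) (Suc (dbar i))"
  have xS: "\<And>j. j < n \<Longrightarrow> x j \<in> strat_set m (f j) (dbar j)"
    using feasible unfolding feasible_state_def s by simp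
  obtain c where c: "c < m" "y = (x i)(c := x i c + 1)"
    using l1_dist_1_increment[OF _ _ _ dist] br xS[OF i] unfolding strat_set_def best_response_def by auto
  have lo: "locally_optimal (C j) m (strat_set m (f j) (dbar j)) (x j) (total_load n x)" if j: "j < n" for j
    using eq j unfolding can_improve_def by (intro best_response_locally_optimal[OF j]) (auto simp: not_less)
  have T': "total_load n x' = (\<lambda>e. total_load n x e + (if e = c then 1 else 0))"
  proof
    fix e show "total_load n x' e = total_load n x e + (if e = c then 1 else 0)"
      using total_load_fun_upd[OF i, of x y e] c unfolding x'_def by (cases "e = c") auto
  qed
  have "locally_optimal (C i) m S y (total_load n x')"
    using best_response_locally_optimal[OF i, of S m C x'] br
    unfolding x'_def best_response_def S_def by simp
  then have "locally_optimal (C i) m S y (total_load n x)"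
    using increment_locally_optimal[OF regular[OF i] lo[OF i] c(1)] xS[OF i] T' c(2)
    unfolding S_def by simp
  then have "hot_state s' (total_load n x) c"
    unfolding hot_state_def s' x'_def[symmetric] using lo T' c(1) unfolding x'_def S_def by auto
  then show ?thesis using that unfolding s by simp
qed

lemma rank_sums_le_budget:
  assumes "\<forall>i<n. d i \<le> dl" "feasible_state d s"
  shows "(\<Sum>j<n. rank_sum (C j) m dl L0 (snd s j)) \<le> n * (dl * (m * dl))"
proof -
  have "rank_sum (C j) m dl L0 (snd s j) \<le> dl * (m * dl)" if "j < n" for j
    using rank_sum_le[of "snd s j" m "f j" "fst s j"] assms that unfolding feasible_state_def
    by (meson le_trans mult_le_mono1)
  then show ?thesis using sum_bounded_above[of "{..<n}" _ "dl * (m * dl)"] by simp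
qed

lemma inc_step_remaining_demand:
  assumes "inc_step n m f C d s s'"
  shows "(\<Sum>i<n. d i - fst s' i) + 1 = (\<Sum>i<n. d i - fst s i)"
proof -
  obtain i where i: "i < n" "fst s i < d i" and s': "fst s' = (fst s)(i := fst s i + 1)"
    using assms unfolding inc_step_def by (auto split: prod.splits)
  have "(\<lambda>k. d k - fst s k)(i := d i - fst s i - 1) = (\<lambda>k. d k - fst s' k)"
    unfolding s' by auto
  then show ?thesis using sum_fun_upd[of "{..<n}" "\<lambda>k. d k - fst s k" i "d i - fst s i - 1"] i by simp
qed

lemma increment_potential_le:
  assumes dl: "\<forall>i<n. d i \<le> dl" and feasible: "feasible_state d s" and step: "inc_step n m f C d s s'"
  shows "potential d dl s' L0' \<le> potential d dl s L0"
proof -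
  define budget where "budget = n * (dl * (m * dl))"
  have "potential d dl s' L0' \<le> (\<Sum>i<n. d i - fst s' i) * budget + budget"
    using rank_sums_le_budget[OF dl inc_step_feasible[OF feasible step]]
    unfolding potential_def budget_def by simp
  also have "\<dots> = (\<Sum>i<n. d i - fst s i) * budget" by (simp flip: inc_step_remaining_demand[OF step])
  also have "\<dots> \<le> potential d dl s L0" unfolding potential_def budget_def by simp
  finally show ?thesis .
qed

lemma run_potential_bound:
  assumes dl: "\<forall>i<n. d i \<le> dl" and run: "alg_run n m f C d L st lab"
  shows "k \<le> L \<Longrightarrow> \<exists>L0 h. feasible_state d (st k) \<and> (equilibrium (st k) \<or> hot_state (st k) L0 h) \<and>
           card {i. i < k \<and> lab i} + potential d dl (st k) L0 \<le> (\<Sum>i<n. d i) * (n * (dl * (m * dl)))"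
proof (induction k)
  case 0
  have "st 0 = (\<lambda>_. 0, \<lambda>_ _. 0)" using run unfolding alg_run_def by simp
  moreover have "potential d dl (\<lambda>_. 0, \<lambda>_ _. 0) L0 = (\<Sum>i<n. d i) * (n * (dl * (m * dl)))" for L0
    unfolding potential_def rank_sum_def by simp
  ultimately show ?case using initial_state by auto
next
  case (Suc k)
  then obtain L0 h where feasible: "feasible_state d (st k)"
    and inv: "equilibrium (st k) \<or> hot_state (st k) L0 h"
    and bound: "card {i. i < k \<and> lab i} + potential d dl (st k) L0 \<le> (\<Sum>i<n. d i) * (n * (dl * (m * dl)))"
    by auto
  have k: "k < L" using Suc.prems by simp
  show ?case
  proof (cases "lab k")
    case True
    then have step: "imp_step n m f C (st k) (st (Suc k))" using run k unfolding alg_run_def by auto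
    then have "hot_state (st k) L0 h"
      using inv unfolding imp_step_def equilibrium_def by (auto split: prod.splits)
    from improvement_step[OF dl feasible this step] obtain h' where
      "hot_state (st (Suc k)) L0 h'" "potential d dl (st (Suc k)) L0 < potential d dl (st k) L0" .
    then show ?thesis
      using bound imp_step_feasible[OF feasible step] card_filter_less_Suc[of k lab] True by fastforce
  next
    case False
    then have step: "inc_step n m f C d (st k) (st (Suc k))" using run k unfolding alg_run_def by auto
    obtain c where "hot_state (st (Suc k)) (total_load n (snd (st k))) c"
      using increment_hot[OF feasible step] .
    then show ?thesis
      using bound inc_step_feasible[OF feasible step]
        increment_potential_le[OF dl feasible step, of "total_load n (snd (st k))" L0]
        card_filter_less_Suc[of k lab] False by fastforce
  qed
qed

end

theorem corollary5p2:
  fixes n m :: nat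
    and f :: "nat \<Rightarrow> nat set \<Rightarrow> nat"
    and C :: "nat \<Rightarrow> nat \<Rightarrow> nat \<Rightarrow> nat \<Rightarrow> real"
    and d :: "nat \<Rightarrow> nat"
    and L :: nat
    and st :: "nat \<Rightarrow> (nat \<Rightarrow> nat) \<times> (nat \<Rightarrow> nat \<Rightarrow> nat)"
    and lab :: "nat \<Rightarrow> bool"
  assumes "\<forall>i<n. polymatroid_rank m (f i)"
    and "\<forall>i<n. \<forall>e<m. regular_cost (C i e)"
    and "\<forall>i<n. d i \<le> f i {..<m}"
    and "alg_run n m f C d L st lab"
  shows "card {k. k < L \<and> lab k} \<le> n ^ 2 * m * (Max (d ` {..<n})) ^ 3"
proof -
  define \<delta> where "\<delta> = Max (d ` {..<n})"
  have \<delta>: "\<forall>i<n. d i \<le> \<delta>" unfolding \<delta>_def by simp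
  interpret regular_game n m f C using assms(2) by unfold_locales simp
  have "card {k. k < L \<and> lab k} \<le> (\<Sum>i<n. d i) * (n * (\<delta> * (m * \<delta>)))"
    using run_potential_bound[OF \<delta> assms(4) order_refl] by fastforce
  also have "\<dots> \<le> (n * \<delta>) * (n * (\<delta> * (m * \<delta>)))"
    using sum_bounded_above[of "{..<n}" d \<delta>] \<delta> by (intro mult_le_mono1) simp
  also have "\<dots> = n ^ 2 * m * \<delta> ^ 3" by (simp add: power2_eq_square power3_eq_cube)
  finally show ?thesis unfolding \<delta>_def .
qed

end
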